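(* Under Assumption 1 and the normalization $p_0=1$, the log-utility of the representative household at the equilibrium $(\bar x,\bar p,\bar y)$ of $\mathcal{E}(\lambda,a)$ is $$V(a,\lambda)=\log u(\bar x_0)=\log(\bar v_0)+\sum_{i\in M}a_{0,i}\log a_{0,i}+a_0^T(I-A)^{-1}u+a_0^T(I-A)^{-1}D\log(\bar v),$$ where $\bar v_0=1+\sum_{i\in M}\varepsilon_i\bar v_i$ is household income, $u_i=\log\lambda_i(a_i)+\sum_{j\in N}a_{i,j}\log a_{i,j}$ and $D=\mathrm{diag}(\sum_{j\in N}a_{i,j}-1)_{i\in M}$.
   Context: Same economy as follows. Household $0$, firms $M=\{1,\dots,m\}$, $N=M\cup\{0\}$ (index 0 also labor, sector 0, $M_0=\{0\}$). Household: one unit of labor, receives all profits, utility $u(x_0)=\prod_{j\in M}x_{0,j}^{a_{0,j}}$, $a_0\ge0$, $\sum a_{0,j}=1$. Firm $i$: requirements $b_i\ge0$, $\sum_\ell b_{i,\ell}\le1$; input shares $a_i\in\mathbb{R}^N_+$ with $\sum_{j\in M_\ell}a_{i,j}=b_{i,\ell}$; production $f_{a,i}(x_i)=\lambda_i(a_i)\prod_{j\in N}x_{i,j}^{a_{i,j}}$; $\varepsilon_i=1-\sum_{j\in N}a_{i,j}$. $A=(a_{i,j})_{i,j\in M}$. General equilibrium: firms maximize profit, household maximizes utility under its budget (labor income plus all profits), all markets clear, labor supply $1$. $\bar v_i=\bar p_i\bar y_i$ denotes equilibrium revenue of firm $i$; $0\log0=0$. Assumption 1: $a_0\in\mathbb{R}^M_{++}$;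 $b_{i,0}>0$ for all $i$; some firm has a positive requirement in some non-labor sector. *)

theory Defs
  imports "HOL-Analysis.Analysis"
begin

text \<open>Firms are indexed by a finite type 'm (the set M); good 0 (labor) is
  treated separately. Cobb-Douglas power with the convention x^0 = 1.\<close>

definition cdp :: "real \<Rightarrow> real \<Rightarrow> real" where
  "cdp x e = (if e = 0 then 1 else x powr e)"

definition xlogx :: "real \<Rightarrow> real" where
  "xlogx x = (if x = 0 then 0 else x * ln x)"

definition prod_fun ::
  "('m::finite \<Rightarrow> real) \<Rightarrow> ('m \<Rightarrow> real) \<Rightarrow> ('m \<Rightarrow> 'm \<Rightarrow> real) \<Rightarrow> 'm \<Rightarrow> real \<Rightarrow> ('m \<Rightarrow> real) \<Rightarrow> real" where
  "prod_fun lam alab A i l z = lam i * cdp l (alab i) * (\<Prod>j\<in>UNIV. cdp (z j) (A i j))"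

definition profit ::
  "('m::finite \<Rightarrow> real) \<Rightarrow> ('m \<Rightarrow> real) \<Rightarrow> ('m \<Rightarrow> 'm \<Rightarrow> real) \<Rightarrow> real \<Rightarrow> ('m \<Rightarrow> real)
     \<Rightarrow> 'm \<Rightarrow> real \<Rightarrow> ('m \<Rightarrow> real) \<Rightarrow> real" where
  "profit lam alab A w p i l z =
     p i * prod_fun lam alab A i l z - w * l - (\<Sum>j\<in>UNIV. p j * z j)"

definition util :: "('m::finite \<Rightarrow> real) \<Rightarrow> ('m \<Rightarrow> real) \<Rightarrow> real" where
  "util a0 x = (\<Prod>j\<in>UNIV. cdp (x j) (a0 j))"

text \<open>Sectoral requirement b_{i,l}: sector 0 = {labor}; sec maps firms/goods in M
  to their (nonzero) sector.\<close>
definition req :: "('m::finite \<Rightarrow> nat) \<Rightarrow> ('m \<Rightarrow> real) \<Rightarrow> ('m \<Rightarrow> 'm \<Rightarrow> real) \<Rightarrow> 'm \<Rightarrow> nat \<Rightarrow> real" where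
  "req sec alab A i s = (if s = 0 then alab i else (\<Sum>j\<in>{j. sec j = s}. A i j))"

text \<open>General equilibrium of the economy E(lam,a): wage w (price of good 0),
  prices p of goods in M, household consumption x0, firm labor inputs lab,
  firm intermediate inputs X i j, outputs y.\<close>
definition equilibrium ::
  "('m::finite \<Rightarrow> real) \<Rightarrow> ('m \<Rightarrow> real) \<Rightarrow> ('m \<Rightarrow> 'm \<Rightarrow> real) \<Rightarrow> ('m \<Rightarrow> real)
    \<Rightarrow> real \<Rightarrow> ('m \<Rightarrow> real) \<Rightarrow> ('m \<Rightarrow> real) \<Rightarrow> ('m \<Rightarrow> real) \<Rightarrow> ('m \<Rightarrow> 'm \<Rightarrow> real) \<Rightarrow> ('m \<Rightarrow> real) \<Rightarrow> bool" where
  "equilibrium lam alab A a0 w p x0 lab X y \<longleftrightarrow>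
     w \<ge> 0 \<and> (\<forall>j. p j \<ge> 0) \<and>
     \<comment> \<open>firms maximize profit\<close>
     (\<forall>i. lab i \<ge> 0 \<and> (\<forall>j. X i j \<ge> 0) \<and>
          y i = prod_fun lam alab A i (lab i) (X i) \<and>
          (\<forall>l z. l \<ge> 0 \<longrightarrow> (\<forall>j. z j \<ge> 0) \<longrightarrow>
               profit lam alab A w p i l z \<le> profit lam alab A w p i (lab i) (X i))) \<and>
     \<comment> \<open>household maximizes utility under its budget (labor income + all profits)\<close>
     (let income = w * 1 + (\<Sum>i\<in>UNIV. profit lam alab A w p i (lab i) (X i)) in
        (\<forall>j. x0 j \<ge> 0) \<and> (\<Sum>j\<in>UNIV. p j * x0 j) \<le> income \<and>
        (\<forall>x. (\<forall>j. x j \<ge> 0) \<longrightarrow> (\<Sum>j\<in>UNIV. p j * x j) \<le> income \<longrightarrow>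
              util a0 x \<le> util a0 x0)) \<and>
     \<comment> \<open>market clearing (goods in M and labor, supply 1)\<close>
     (\<forall>j. y j = x0 j + (\<Sum>i\<in>UNIV. X i j)) \<and>
     (\<Sum>i\<in>UNIV. lab i) = 1"

end

theory Submission
  imports Defs
begin

(*
  With Cobb-Douglas preferences and technologies every agent spends fixed shares of
  its budget.  For the household this follows from the first-order condition of
  log-utility along segments to affordable bundles: it spends a0_j v0 on good j.
  For firm i, rescaling a single input around the optimum shows that, with revenue
  v_i = p_i y_i, it spends alab_i v_i on labour and A_ij v_i on good j, keeping the
  profit eps_i v_i; hence income is v0 = 1 + sum_i eps_i v_i.  Substituting these
  demands into the production functions and using ln p_i = ln v_i - ln y_i gives the
  linear system (I - A)(-ln p) = u + D ln v, which is solvable because positive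
  labour shares make the row sums of A less than 1.  Finally
  ln u(x0) = sum_j a0_j ln (a0_j v0 / p_j).
*)

lemma cdp_0_left: "e \<noteq> 0 \<Longrightarrow> cdp 0 e = 0"
  by (simp add: cdp_def)

lemma cdp_pos: "x > 0 \<Longrightarrow> cdp x e > 0"
  by (simp add: cdp_def)

lemma cdp_mult_left: "t \<noteq> 0 \<Longrightarrow> cdp (t * x) e = t powr e * cdp x e"
  by (simp add: cdp_def powr_mult)

(* No side conditions are needed since ln 0 = 0 and 0 powr e = 0. *)
lemma ln_cdp: "ln (cdp x e) = e * ln x"
  by (simp add: cdp_def)

lemma util_pos: "(\<And>j. x j > 0) \<Longrightarrow> util a x > 0"
  unfolding util_def by (simp add: prod_pos cdp_pos)

lemma util_eq_0: "a j \<noteq> 0 \<Longrightarrow> x j = 0 \<Longrightarrow> util a x = 0"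
  unfolding util_def by (metis UNIV_I cdp_0_left finite prod_zero_iff)

lemma ln_util: "util a x \<noteq> 0 \<Longrightarrow> ln (util a x) = (\<Sum>j\<in>UNIV. a j * ln (x j))"
  unfolding util_def by (simp add: ln_prod ln_cdp)

locale cobb_douglas_consumer =
  fixes a p :: "'m::finite \<Rightarrow> real" and income :: real and x :: "'m \<Rightarrow> real"
  assumes a_pos: "\<And>j. a j > 0"
    and a_sum: "(\<Sum>j\<in>UNIV. a j) = 1"
    and p_nonneg: "\<And>j. p j \<ge> 0"
    and income_pos: "income > 0"
    and x_nonneg: "\<And>j. x j \<ge> 0"
    and budget: "(\<Sum>j\<in>UNIV. p j * x j) \<le> income"
    and utility_max: "\<And>x'. (\<And>j. x' j \<ge> 0) \<Longrightarrow> (\<Sum>j\<in>UNIV. p j * x' j) \<le> income \<Longrightarrow>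
                        util a x' \<le> util a x"
begin

lemma util_optimum_pos: "util a x > 0"
proof -
  define c where "c = income / ((\<Sum>j\<in>UNIV. p j) + 1)"
  have sum_p: "(\<Sum>j\<in>UNIV. p j) \<ge> 0"
    by (simp add: p_nonneg sum_nonneg)
  then have c_pos: "c > 0"
    unfolding c_def using income_pos by simp
  have "(\<Sum>j\<in>UNIV. p j * c) = c * (\<Sum>j\<in>UNIV. p j)"
    by (simp add: sum_distrib_left mult.commute)
  also have "\<dots> \<le> income"
    using sum_p income_pos unfolding c_def by (simp add: field_simps)
  finally have "util a (\<lambda>_. c) \<le> util a x"
    using c_pos by (intro utility_max) auto
  moreover have "util a (\<lambda>_. c) > 0"
    using c_pos by (rule util_pos)
  ultimately show ?thesis by simp
qed

lemma x_pos: "x j > 0"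
  using util_optimum_pos util_eq_0[of a j x] a_pos[of j] x_nonneg[of j] by fastforce

lemma ln_util_segment_le:
  assumes nonneg: "\<And>j. x' j \<ge> 0" and affordable: "(\<Sum>j\<in>UNIV. p j * x' j) \<le> income"
    and h: "0 < h" "h < 1"
  shows "(\<Sum>j\<in>UNIV. a j * ln (x j + h * (x' j - x j))) \<le> (\<Sum>j\<in>UNIV. a j * ln (x j))"
proof -
  define xh where "xh j = (1 - h) * x j + h * x' j" for j
  have xh_pos: "xh j > 0" for j
    unfolding xh_def using h x_pos[of j] nonneg[of j] by (simp add: add_pos_nonneg)
  have "(\<Sum>j\<in>UNIV. p j * xh j) = (\<Sum>j\<in>UNIV. (1 - h) * (p j * x j) + h * (p j * x' j))"
    unfolding xh_def by (simp add: algebra_simps)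
  also have "\<dots> = (1 - h) * (\<Sum>j\<in>UNIV. p j * x j) + h * (\<Sum>j\<in>UNIV. p j * x' j)"
    by (simp add: sum.distrib sum_distrib_left)
  also have "\<dots> \<le> (1 - h) * income + h * income"
    using h budget affordable by (intro add_mono mult_left_mono) auto
  also have "\<dots> = income"
    by (simp add: algebra_simps)
  finally have "util a xh \<le> util a x"
    using xh_pos by (intro utility_max) (auto simp: less_imp_le)
  moreover have "xh j = x j + h * (x' j - x j)" for j
    unfolding xh_def by (simp add: algebra_simps)
  ultimately show ?thesis
    using util_pos[of xh a, OF xh_pos] util_optimum_pos
    by (simp add: ln_util flip: ln_le_cancel_iff)
qed

lemma first_order_condition:
  assumes nonneg: "\<And>j. x' j \<ge> 0" and affordable: "(\<Sum>j\<in>UNIV. p j * x' j) \<le> income"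
  shows "(\<Sum>j\<in>UNIV. a j * x' j / x j) \<le> 1"
proof (rule ccontr)
  define f where "f t = (\<Sum>j\<in>UNIV. a j * ln (x j + t * (x' j - x j)))" for t
  assume "\<not> ?thesis"
  moreover have "(\<Sum>j\<in>UNIV. a j * ((x' j - x j) / x j)) = (\<Sum>j\<in>UNIV. a j * x' j / x j - a j)"
  proof (rule sum.cong[OF refl])
    fix j
    show "a j * ((x' j - x j) / x j) = a j * x' j / x j - a j"
      using x_pos[of j] by (simp add: field_simps)
  qed
  ultimately have "(\<Sum>j\<in>UNIV. a j * ((x' j - x j) / x j)) > 0"
    by (simp add: sum_subtractf a_sum)
  \<comment> \<open>log-utility along the segment from x to x' would increase at x\<close>
  moreover have "DERIV f 0 :> (\<Sum>j\<in>UNIV. a j * ((x' j - x j) / x j))"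
    unfolding f_def using x_pos by (auto intro!: derivative_eq_intros sum.cong)
  ultimately obtain d where "d > 0" and increasing: "\<And>h. 0 < h \<Longrightarrow> h < d \<Longrightarrow> f 0 < f (0 + h)"
    using DERIV_pos_inc_right by blast
  define h where "h = min (d / 2) (1 / 2)"
  have "0 < h" "h < d" "h < 1"
    unfolding h_def using \<open>d > 0\<close> by auto
  then show False
    using increasing ln_util_segment_le[OF nonneg affordable, of h] by (force simp: f_def)
qed

lemma single_good_bound:
  assumes "c \<ge> 0" and "p j * c \<le> income"
  shows "a j * c \<le> x j"
proof -
  have "(\<Sum>k\<in>UNIV. a k * (if k = j then c else 0) / x k) \<le> 1"
    using assms by (intro first_order_condition) (auto simp: if_distrib cong: if_cong)
  also have "(\<Sum>k\<in>UNIV. a k * (if k = j then c else 0) / x k)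
               = (\<Sum>k\<in>UNIV. if k = j then a j * c / x j else 0)"
    by (rule sum.cong) auto
  finally show ?thesis
    using x_pos[of j] by simp
qed

lemma p_pos: "p j > 0"
proof (rule ccontr)
  assume "\<not> p j > 0"
  then have "p j = 0"
    using p_nonneg[of j] by simp
  then have "a j * (2 * x j / a j) \<le> x j"
    using x_pos[of j] a_pos[of j] income_pos by (intro single_good_bound) auto
  then show False
    using x_pos[of j] a_pos[of j] by simp
qed

lemma demand: "p j * x j = a j * income"
proof -
  have le: "a k * income \<le> p k * x k" for k
    using single_good_bound[of "income / p k" k] income_pos p_pos[of k]
    by (simp add: field_simps)
  have "(\<Sum>k\<in>UNIV. p k * x k - a k * income) \<le> 0"
    using budget a_sum by (simp add: sum_subtractf flip: sum_distrib_right)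
  then have "(\<Sum>k\<in>UNIV. p k * x k - a k * income) = 0"
    using le by (intro antisym sum_nonneg) auto
  then have "p k * x k - a k * income = 0" for k
    using le by (subst (asm) sum_nonneg_eq_0_iff) auto
  then show ?thesis by simp
qed

end

lemma prod_fun_mult_labor:
  "t \<noteq> 0 \<Longrightarrow> prod_fun lam alab A i (t * l) z = t powr alab i * prod_fun lam alab A i l z"
  by (simp add: prod_fun_def cdp_mult_left)

lemma prod_fun_mult_input:
  assumes "t \<noteq> 0"
  shows "prod_fun lam alab A i l (\<lambda>k. if k = j then t * z k else z k)
           = t powr A i j * prod_fun lam alab A i l z"
proof -
  have "(\<Prod>k\<in>UNIV. cdp (if k = j then t * z k else z k) (A i k))
          = (\<Prod>k\<in>UNIV. (if k = j then t powr A i j else 1) * cdp (z k) (A i k))"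
    using assms by (intro prod.cong) (auto simp: cdp_mult_left)
  also have "\<dots> = t powr A i j * (\<Prod>k\<in>UNIV. cdp (z k) (A i k))"
    by (simp add: prod.distrib)
  finally show ?thesis by (simp add: prod_fun_def)
qed

lemma ln_prod_fun:
  assumes "prod_fun lam alab A i l z \<noteq> 0"
  shows "ln (prod_fun lam alab A i l z) = ln (lam i) + alab i * ln l + (\<Sum>j\<in>UNIV. A i j * ln (z j))"
  using assms by (simp add: prod_fun_def ln_mult ln_prod ln_cdp)

lemma sum_scale_coordinate:
  fixes p z :: "'a::finite \<Rightarrow> real"
  shows "(\<Sum>k\<in>UNIV. p k * (if k = j then t * z k else z k))
           = (\<Sum>k\<in>UNIV. p k * z k) + (t - 1) * (p j * z j)"
proof -
  have "(\<Sum>k\<in>UNIV. p k * (if k = j then t * z k else z k))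
          = (\<Sum>k\<in>UNIV. p k * z k + (if k = j then (t - 1) * (p j * z j) else 0))"
    by (intro sum.cong) (auto simp: algebra_simps)
  then show ?thesis by (simp add: sum.distrib)
qed

lemma scaling_foc:
  fixes R e c :: real
  assumes "\<And>t. t > 0 \<Longrightarrow> R * t powr e - c * t \<le> R - c"
  shows "R * e = c"
proof -
  have "DERIV (\<lambda>t. R * t powr e - c * t) 1 :> R * (e * 1 powr (e - 1)) - c * 1"
    by (auto intro!: derivative_eq_intros)
  then have "R * (e * 1 powr (e - 1)) - c * 1 = 0"
    by (rule DERIV_local_max[of _ _ _ "1/2"]) (use assms in \<open>auto simp: abs_if\<close>)
  then show ?thesis by simp
qed

context
  fixes lam alab :: "'m::finite \<Rightarrow> real" and A :: "'m \<Rightarrow> 'm \<Rightarrow> real"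
    and w :: real and p :: "'m \<Rightarrow> real" and i :: 'm and l :: real and z :: "'m \<Rightarrow> real"
  assumes l_nonneg: "l \<ge> 0" and z_nonneg: "\<And>j. z j \<ge> 0"
    and output_nonzero: "prod_fun lam alab A i l z \<noteq> 0"
    and profit_max: "\<And>l' z'. l' \<ge> 0 \<Longrightarrow> (\<And>j. z' j \<ge> 0) \<Longrightarrow>
                       profit lam alab A w p i l' z' \<le> profit lam alab A w p i l z"
begin

lemma profit_max_foc_labor: "p i * prod_fun lam alab A i l z * alab i = w * l"
proof (cases "l = 0")
  case True
  then have "alab i = 0"
    using output_nonzero cdp_0_left[of "alab i"] by (auto simp: prod_fun_def)
  with True show ?thesis by simp
next
  case False
  then have "l > 0" using l_nonneg by simp
  show ?thesis
  proof (rule scaling_foc)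
    fix t :: real
    assume "t > 0"
    then have "profit lam alab A w p i (t * l) z \<le> profit lam alab A w p i l z"
      using \<open>l > 0\<close> z_nonneg by (intro profit_max) auto
    moreover have scaled: "prod_fun lam alab A i (t * l) z = t powr alab i * prod_fun lam alab A i l z"
      using \<open>t > 0\<close> by (simp add: prod_fun_mult_labor)
    ultimately show "p i * prod_fun lam alab A i l z * t powr alab i - w * l * t
                 \<le> p i * prod_fun lam alab A i l z - w * l"
      unfolding profit_def scaled by (simp add: algebra_simps)
  qed
qed

lemma profit_max_foc_input: "p i * prod_fun lam alab A i l z * A i j = p j * z j"
proof (cases "z j = 0")
  case True
  moreover have "cdp (z j) (A i j) \<noteq> 0"
    using output_nonzero by (auto simp: prod_fun_def)
  ultimately have "A i j = 0"
    using cdp_0_left by metis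
  with True show ?thesis by simp
next
  case False
  then have "z j > 0" using z_nonneg[of j] by simp
  show ?thesis
  proof (rule scaling_foc)
    fix t :: real
    assume "t > 0"
    then have "profit lam alab A w p i l (\<lambda>k. if k = j then t * z k else z k)
                 \<le> profit lam alab A w p i l z"
      using l_nonneg z_nonneg \<open>z j > 0\<close> by (intro profit_max) auto
    then show "p i * prod_fun lam alab A i l z * t powr A i j - p j * z j * t
                 \<le> p i * prod_fun lam alab A i l z - p j * z j"
      using \<open>t > 0\<close> by (simp add: profit_def prod_fun_mult_input sum_scale_coordinate algebra_simps)
  qed
qed

lemma profit_max_value:
  "profit lam alab A w p i l z = (1 - (alab i + (\<Sum>j\<in>UNIV. A i j))) * (p i * prod_fun lam alab A i l z)"
proof -
  let ?v = "p i * prod_fun lam alab A i l z"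
  have "profit lam alab A w p i l z = ?v - ?v * alab i - (\<Sum>j\<in>UNIV. ?v * A i j)"
    by (simp add: profit_def profit_max_foc_labor profit_max_foc_input)
  then show ?thesis
    by (simp add: algebra_simps flip: sum_distrib_left sum_distrib_right)
qed

end

lemma mult_ln_share_demand:
  assumes "e \<ge> 0" "v > 0" "q > 0" "q * x = v * e"
  shows "e * ln x = xlogx e + e * ln v - e * ln q"
proof (cases "e = 0")
  case False
  then have "e > 0" using assms(1) by simp
  have "x = v * e / q"
    using assms(3,4) by (simp add: field_simps)
  then have "ln x = ln v + ln e - ln q"
    using \<open>e > 0\<close> assms(2,3) by (simp add: ln_div ln_mult)
  then have "e * ln x = e * (ln v + ln e - ln q)"
    by simp
  then show ?thesis
    using False by (simp add: xlogx_def algebra_simps)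
qed (simp add: xlogx_def)

lemma mat_1_minus_mult_vector_component:
  fixes M :: "'a::comm_ring_1^'n^'n"
  shows "((mat 1 - M) *v x) $ i = x $ i - (\<Sum>j\<in>UNIV. M $ i $ j * x $ j)"
  by (simp only: matrix_vector_mult_diff_rdistrib matrix_vector_mul_lid vector_minus_component)
    (simp add: matrix_vector_mult_def)

lemma matrix_inv_left: "invertible M \<Longrightarrow> matrix_inv M ** M = mat 1"
  unfolding invertible_def matrix_inv_def by (rule someI2_ex) auto

lemma invertible_mat_1_minus:
  fixes M :: "real^'n^'n"
  assumes row_sums: "\<And>i. (\<Sum>j\<in>UNIV. \<bar>M $ i $ j\<bar>) < 1"
  shows "invertible (mat 1 - M)"
proof -
  have "x = 0" if kernel: "(mat 1 - M) *v x = 0" for x :: "real^'n"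
  proof -
    \<comment> \<open>an entry of maximal modulus would satisfy |x_i| \<le> (\<Sum>j. |M_ij|) |x_i|\<close>
    have "Max (range (\<lambda>j. \<bar>x $ j\<bar>)) \<in> range (\<lambda>j. \<bar>x $ j\<bar>)"
      by (intro Max_in) auto
    then obtain i where i: "\<bar>x $ i\<bar> = Max (range (\<lambda>j. \<bar>x $ j\<bar>))"
      by (metis imageE)
    have max: "\<bar>x $ j\<bar> \<le> \<bar>x $ i\<bar>" for j
      unfolding i by (intro Max_ge) auto
    have "x $ i = (\<Sum>j\<in>UNIV. M $ i $ j * x $ j)"
      using kernel mat_1_minus_mult_vector_component[of M x i] by simp
    then have "\<bar>x $ i\<bar> \<le> (\<Sum>j\<in>UNIV. \<bar>M $ i $ j\<bar> * \<bar>x $ i\<bar>)"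
      using max by (auto intro!: order.trans[OF sum_abs] sum_mono mult_left_mono simp: abs_mult)
    also have "\<dots> = (\<Sum>j\<in>UNIV. \<bar>M $ i $ j\<bar>) * \<bar>x $ i\<bar>"
      by (simp add: sum_distrib_right)
    finally have "\<bar>x $ i\<bar> = 0"
      using row_sums[of i] by (smt (verit) mult_le_cancel_right1 abs_ge_zero)
    then show "x = 0"
      using max by (simp add: vec_eq_iff)
  qed
  then show ?thesis
    using matrix_left_invertible_ker invertible_left_inverse by blast
qed

locale cobb_douglas_economy =
  fixes lam alab :: "'m::finite \<Rightarrow> real" and A :: "'m \<Rightarrow> 'm \<Rightarrow> real" and a0 :: "'m \<Rightarrow> real"
    and p x0 lab y :: "'m \<Rightarrow> real" and X :: "'m \<Rightarrow> 'm \<Rightarrow> real"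
  assumes A_nonneg: "\<And>i j. A i j \<ge> 0"
    and alab_pos: "\<And>i. alab i > 0"
    and returns_le_1: "\<And>i. alab i + (\<Sum>j\<in>UNIV. A i j) \<le> 1"
    and a0_pos: "\<And>j. a0 j > 0"
    and a0_sum: "(\<Sum>j\<in>UNIV. a0 j) = 1"
    and equilibrium: "equilibrium lam alab A a0 1 p x0 lab X y"
begin

definition income :: real
  where "income = 1 + (\<Sum>i\<in>UNIV. profit lam alab A 1 p i (lab i) (X i))"

lemma lab_nonneg: "lab i \<ge> 0"
  and X_nonneg: "X i j \<ge> 0"
  and y_eq: "y i = prod_fun lam alab A i (lab i) (X i)"
  and profit_max: "\<And>l z. l \<ge> 0 \<Longrightarrow> (\<And>j. z j \<ge> 0) \<Longrightarrow>
                     profit lam alab A 1 p i l z \<le> profit lam alab A 1 p i (lab i) (X i)"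
  using equilibrium unfolding equilibrium_def by auto

lemma market_clearing: "y j = x0 j + (\<Sum>i\<in>UNIV. X i j)"
  using equilibrium unfolding equilibrium_def by auto

lemma profit_nonneg: "profit lam alab A 1 p i (lab i) (X i) \<ge> 0"
proof -
  have "profit lam alab A 1 p i 0 (\<lambda>_. 0) = 0"
    using alab_pos[of i] by (simp add: profit_def prod_fun_def cdp_0_left)
  then show ?thesis
    using profit_max[where l = 0 and z = "\<lambda>_. 0" and i = i] by simp
qed

sublocale household: cobb_douglas_consumer a0 p income x0
proof unfold_locales
  show "income > 0"
    unfolding income_def using profit_nonneg by (simp add: add_pos_nonneg sum_nonneg)
  show "\<And>j. p j \<ge> 0" "\<And>j. x0 j \<ge> 0" "(\<Sum>j\<in>UNIV. p j * x0 j) \<le> income"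
    "\<And>x'. (\<And>j. x' j \<ge> 0) \<Longrightarrow> (\<Sum>j\<in>UNIV. p j * x' j) \<le> income \<Longrightarrow> util a0 x' \<le> util a0 x0"
    using equilibrium unfolding equilibrium_def income_def Let_def by auto
qed (use a0_pos a0_sum in auto)

lemma y_pos: "y i > 0"
  using market_clearing[of i] household.x_pos[of i] X_nonneg
  by (simp add: add_pos_nonneg sum_nonneg)

lemma output_nonzero: "prod_fun lam alab A i (lab i) (X i) \<noteq> 0"
  using y_pos[of i] by (simp add: y_eq)

lemma foc_labor: "p i * y i * alab i = lab i"
  using profit_max_foc_labor[OF lab_nonneg X_nonneg output_nonzero profit_max]
  by (simp add: y_eq)

lemma foc_input: "p i * y i * A i j = p j * X i j"
  using profit_max_foc_input[OF lab_nonneg X_nonneg output_nonzero profit_max]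
  by (simp add: y_eq)

lemma income_eq: "income = 1 + (\<Sum>i\<in>UNIV. (1 - (alab i + (\<Sum>j\<in>UNIV. A i j))) * (p i * y i))"
  unfolding income_def
  using profit_max_value[OF lab_nonneg X_nonneg output_nonzero profit_max]
  by (simp add: y_eq)

lemma ln_output:
  "ln (y i) = ln (lam i) + xlogx (alab i) + (\<Sum>j\<in>UNIV. xlogx (A i j))
     + (alab i + (\<Sum>j\<in>UNIV. A i j)) * ln (p i * y i) - (\<Sum>j\<in>UNIV. A i j * ln (p j))"
proof -
  have v_pos: "p i * y i > 0"
    using household.p_pos y_pos by simp
  have "ln (y i) = ln (lam i) + alab i * ln (lab i) + (\<Sum>j\<in>UNIV. A i j * ln (X i j))"
    using y_pos[of i] by (simp add: y_eq ln_prod_fun)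
  also have "alab i * ln (lab i) = xlogx (alab i) + alab i * ln (p i * y i) - alab i * ln 1"
    using alab_pos[of i] v_pos foc_labor[of i] by (intro mult_ln_share_demand) auto
  also have "(\<Sum>j\<in>UNIV. A i j * ln (X i j))
               = (\<Sum>j\<in>UNIV. xlogx (A i j) + A i j * ln (p i * y i) - A i j * ln (p j))"
    using A_nonneg v_pos household.p_pos foc_input by (intro sum.cong refl mult_ln_share_demand) auto
  finally show ?thesis
    by (simp add: sum.distrib sum_subtractf algebra_simps flip: sum_distrib_right)
qed

lemma ln_price_system:
  "(mat 1 - (\<chi> i j. A i j)) *v (\<chi> i. - ln (p i))
     = (\<chi> i. ln (lam i) + xlogx (alab i) + (\<Sum>j\<in>UNIV. xlogx (A i j)))
       + (\<chi> i. (alab i + (\<Sum>j\<in>UNIV. A i j) - 1) * ln (p i * y i))"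
proof (subst vec_eq_iff, intro allI)
  fix i
  have "ln (p i) = ln (p i * y i) - ln (y i)"
    using household.p_pos[of i] y_pos[of i] by (simp add: ln_mult)
  then show "((mat 1 - (\<chi> i j. A i j)) *v (\<chi> i. - ln (p i))) $ i
      = ((\<chi> i. ln (lam i) + xlogx (alab i) + (\<Sum>j\<in>UNIV. xlogx (A i j)))
         + (\<chi> i. (alab i + (\<Sum>j\<in>UNIV. A i j) - 1) * ln (p i * y i))) $ i"
    unfolding mat_1_minus_mult_vector_component by (simp add: ln_output sum_negf algebra_simps)
qed

lemma neg_ln_prices:
  "(\<chi> i. - ln (p i)) = matrix_inv (mat 1 - (\<chi> i j. A i j))
     *v ((\<chi> i. ln (lam i) + xlogx (alab i) + (\<Sum>j\<in>UNIV. xlogx (A i j)))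
       + (\<chi> i. (alab i + (\<Sum>j\<in>UNIV. A i j) - 1) * ln (p i * y i)))"
proof -
  have "(\<Sum>j\<in>UNIV. \<bar>A i j\<bar>) < 1" for i
    using A_nonneg alab_pos[of i] returns_le_1[of i] by simp
  then have "matrix_inv (mat 1 - (\<chi> i j. A i j)) ** (mat 1 - (\<chi> i j. A i j)) = mat 1"
    by (intro matrix_inv_left invertible_mat_1_minus) simp
  then show ?thesis
    by (simp flip: ln_price_system add: matrix_vector_mul_assoc)
qed

lemma ln_util_optimum:
  "ln (util a0 x0) = ln income + (\<Sum>j\<in>UNIV. a0 j * ln (a0 j)) + (\<chi> j. a0 j) \<bullet> (\<chi> j. - ln (p j))"
proof -
  have "a0 j * ln (x0 j) = a0 j * ln (a0 j) + a0 j * ln income + a0 j * - ln (p j)" for j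
  proof -
    have "x0 j = a0 j * income / p j"
      using household.demand[of j] household.p_pos[of j] by (simp add: field_simps)
    then show ?thesis
      using a0_pos[of j] household.income_pos household.p_pos[of j]
      by (simp add: ln_div ln_mult algebra_simps)
  qed
  then have "(\<Sum>j\<in>UNIV. a0 j * ln (x0 j))
               = (\<Sum>j\<in>UNIV. a0 j * ln (a0 j)) + ln income + (\<Sum>j\<in>UNIV. a0 j * - ln (p j))"
    by (simp add: sum.distrib sum_subtractf sum_negf a0_sum flip: sum_distrib_right)
  then show ?thesis
    using household.util_optimum_pos by (simp add: ln_util inner_vec_def)
qed

end

theorem mainTheorem3:
  fixes lam :: "'m::finite \<Rightarrow> real"
    and alab :: "'m \<Rightarrow> real"
    and A :: "'m \<Rightarrow> 'm \<Rightarrow> real"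
    and a0 :: "'m \<Rightarrow> real"
    and sec :: "'m \<Rightarrow> nat"
    and w :: real and p x0 lab y :: "'m \<Rightarrow> real" and X :: "'m \<Rightarrow> 'm \<Rightarrow> real"
  assumes lam_pos: "\<forall>i. lam i > 0"
    and A_nonneg: "\<forall>i j. A i j \<ge> 0"
    and alab_nonneg: "\<forall>i. alab i \<ge> 0"
    and sec_nz: "\<forall>j. sec j \<noteq> 0"
    and req_sum: "\<forall>i. alab i + (\<Sum>j\<in>UNIV. A i j) \<le> 1"
    and a0_pos: "\<forall>j. a0 j > 0"
    and a0_sum: "(\<Sum>j\<in>UNIV. a0 j) = 1"
    and lab_req_pos: "\<forall>i. req sec alab A i 0 > 0"
    and nonlab_req: "\<exists>i s. s \<noteq> 0 \<and> req sec alab A i s > 0"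
    and norm: "w = 1"
    and eq: "equilibrium lam alab A a0 w p x0 lab X y"
  shows "let v = (\<lambda>i. p i * y i);
             eps = (\<lambda>i. 1 - (alab i + (\<Sum>j\<in>UNIV. A i j)));
             v0 = 1 + (\<Sum>i\<in>UNIV. eps i * v i);
             Am = (\<chi> i j. A i j) :: real^'m^'m;
             a0v = (\<chi> i. a0 i) :: real^'m;
             uv = (\<chi> i. ln (lam i) + xlogx (alab i) + (\<Sum>j\<in>UNIV. xlogx (A i j))) :: real^'m;
             Dlogv = (\<chi> i. (alab i + (\<Sum>j\<in>UNIV. A i j) - 1) * ln (v i)) :: real^'m;
             Linv = matrix_inv (mat 1 - Am)
         in w * 1 + (\<Sum>i\<in>UNIV. profit lam alab A w p i (lab i) (X i)) = v0 \<and>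
            ln (util a0 x0) = ln v0 + (\<Sum>i\<in>UNIV. a0 i * ln (a0 i))
              + a0v \<bullet> (Linv *v uv) + a0v \<bullet> (Linv *v Dlogv)"
proof -
  have alab_pos: "alab i > 0" for i
    using lab_req_pos by (simp add: req_def)
  interpret cobb_douglas_economy lam alab A a0 p x0 lab y X
    using A_nonneg alab_pos req_sum a0_pos a0_sum eq norm by unfold_locales auto
  show ?thesis
    using income_eq ln_util_optimum neg_ln_prices
    by (simp add: Let_def norm income_def matrix_vector_right_distrib inner_add_right)
qed

end
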